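(* Let $\tfrac12<\alpha<1$, $0<\beta\le\alpha-\tfrac12$, and let $K$ be a non-negative symmetric integrable function on $\mathbb{R}$ with $K(x)=O\big((1+|x|^{1-\beta})^{-1}\big)$. Let $I_1(x,y,w)=K(w)K(x+y-w)$ and $I_2(x,y,w)=K(w-x)K(w-y)$. Then $\Delta_0:=\int_0^\infty x^{-\alpha}K(x)\,dx<\infty$, $A_\alpha:=\int_0^\infty\int_0^\infty\int_0^\infty x^{-\alpha}y^{-\alpha}[I_1(x,y,w)+I_2(x,y,w)]\,dx\,dy\,dw<\infty$, and, as $h\to0$, $\Delta_1:=\int_0^{1/h}\int_0^{1/h}\int_x^{1/h}x^{-\alpha}y^{-\alpha}\max\{w,y\}[I_1(x,y,w)+I_2(x,y,w)]\,dx\,dy\,dw=o(1/h)$.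
   Context: In $\Delta_1$ the innermost integral is over $w\in[x,1/h]$, the outer ones over $x,y\in[0,1/h]$. *)

theory Defs
  imports "HOL-Analysis.Analysis"
begin

definition I1 :: "(real \<Rightarrow> real) \<Rightarrow> real \<Rightarrow> real \<Rightarrow> real \<Rightarrow> real" where
  "I1 K x y w = K w * K (x + y - w)"

definition I2 :: "(real \<Rightarrow> real) \<Rightarrow> real \<Rightarrow> real \<Rightarrow> real \<Rightarrow> real" where
  "I2 K x y w = K (w - x) * K (w - y)"

definition Delta0 :: "real \<Rightarrow> (real \<Rightarrow> real) \<Rightarrow> ennreal" where
  "Delta0 \<alpha> K = (\<integral>\<^sup>+ x \<in> {0<..}. ennreal (x powr (-\<alpha>) * K x) \<partial>lborel)"

definition A_alpha :: "real \<Rightarrow> (real \<Rightarrow> real) \<Rightarrow> ennreal" where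
  "A_alpha \<alpha> K = (\<integral>\<^sup>+ w \<in> {0<..}. \<integral>\<^sup>+ y \<in> {0<..}. \<integral>\<^sup>+ x \<in> {0<..}.
      ennreal (x powr (-\<alpha>) * y powr (-\<alpha>) * (I1 K x y w + I2 K x y w)) \<partial>lborel \<partial>lborel \<partial>lborel)"

definition Delta1 :: "real \<Rightarrow> (real \<Rightarrow> real) \<Rightarrow> real \<Rightarrow> ennreal" where
  "Delta1 \<alpha> K h = (\<integral>\<^sup>+ x \<in> {0..1/h}. \<integral>\<^sup>+ y \<in> {0..1/h}. \<integral>\<^sup>+ w \<in> {x..1/h}.
      ennreal (x powr (-\<alpha>) * y powr (-\<alpha>) * max w y * (I1 K x y w + I2 K x y w))
        \<partial>lborel \<partial>lborel \<partial>lborel)"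

end

theory Submission
  imports Defs
begin

(* The finiteness statements follow from power-law bounds on K near 0 and at infinity.
   For the I2 part, the x- and y-integrals factor as g(w)^2 with g = x_+^(-alpha) * K, and
   g(w) = O(w^(-alpha (1 - beta))) is square integrable because 2 alpha (1 - beta) > 1.
   For the I1 part, the w-integral is a self-convolution of K at s = x + y, which is
   O((1 + (s/2)^(1 - beta))^(-1)); this factors as O(p(x) p(y)) with
   p(x) = (1 + (x/2)^((1 - beta)/2))^(-1), and x^(-alpha) p(x) is integrable because
   alpha + (1 - beta)/2 > 1.  Finally h * Delta1(h) is bounded by the integral of
   min(1, h max(w, y)) times the integrand of A_alpha, which tends to 0 by dominated
   convergence. *)

lemma nn_integral_lborel_triple:
  fixes f :: "real \<Rightarrow> real \<Rightarrow> real \<Rightarrow> ennreal"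
  assumes "(\<lambda>z. f (fst z) (fst (snd z)) (snd (snd z))) \<in> borel_measurable (borel \<Otimes>\<^sub>M (borel \<Otimes>\<^sub>M borel))"
  shows "(\<integral>\<^sup>+x. \<integral>\<^sup>+y. \<integral>\<^sup>+w. f x y w \<partial>lborel \<partial>lborel \<partial>lborel)
    = (\<integral>\<^sup>+z. f (fst z) (fst (snd z)) (snd (snd z)) \<partial>lborel)"
proof -
  define g :: "real \<times> real \<times> real \<Rightarrow> ennreal" where "g = (\<lambda>z. f (fst z) (fst (snd z)) (snd (snd z)))"
  have [measurable]: "g \<in> borel_measurable borel"
    using assms by (simp add: g_def borel_prod)
  have "(\<integral>\<^sup>+y. \<integral>\<^sup>+w. g (x, y, w) \<partial>lborel \<partial>lborel) = (\<integral>\<^sup>+q. g (x, q) \<partial>lborel)" for x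
    using lborel.nn_integral_fst[where f="\<lambda>q. g (x, q)"] by (simp add: lborel_prod)
  then have "(\<integral>\<^sup>+x. \<integral>\<^sup>+y. \<integral>\<^sup>+w. g (x, y, w) \<partial>lborel \<partial>lborel \<partial>lborel) = (\<integral>\<^sup>+z. g z \<partial>lborel)"
    using lborel.nn_integral_fst[where f=g] by (simp add: lborel_prod)
  then show ?thesis
    by (simp add: g_def)
qed

lemma nn_integral_lborel_triple_reverse:
  fixes f :: "real \<Rightarrow> real \<Rightarrow> real \<Rightarrow> ennreal"
  assumes "(\<lambda>z. f (fst z) (fst (snd z)) (snd (snd z))) \<in> borel_measurable (borel \<Otimes>\<^sub>M (borel \<Otimes>\<^sub>M borel))"
  shows "(\<integral>\<^sup>+w. \<integral>\<^sup>+y. \<integral>\<^sup>+x. f x y w \<partial>lborel \<partial>lborel \<partial>lborel) =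
         (\<integral>\<^sup>+x. \<integral>\<^sup>+y. \<integral>\<^sup>+w. f x y w \<partial>lborel \<partial>lborel \<partial>lborel)"
proof -
  define g :: "real \<times> real \<times> real \<Rightarrow> ennreal" where "g = (\<lambda>z. f (fst z) (fst (snd z)) (snd (snd z)))"
  have [measurable]: "g \<in> borel_measurable borel"
    using assms by (simp add: g_def borel_prod)
  have "(\<integral>\<^sup>+w. \<integral>\<^sup>+y. \<integral>\<^sup>+x. g (x, y, w) \<partial>lborel \<partial>lborel \<partial>lborel) =
        (\<integral>\<^sup>+y. \<integral>\<^sup>+w. \<integral>\<^sup>+x. g (x, y, w) \<partial>lborel \<partial>lborel \<partial>lborel)"
    by (rule lborel_pair.Fubini') measurable
  also have "\<dots> = (\<integral>\<^sup>+y. \<integral>\<^sup>+x. \<integral>\<^sup>+w. g (x, y, w) \<partial>lborel \<partial>lborel \<partial>lborel)"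
    by (intro nn_integral_cong lborel_pair.Fubini') measurable
  also have "\<dots> = (\<integral>\<^sup>+x. \<integral>\<^sup>+y. \<integral>\<^sup>+w. g (x, y, w) \<partial>lborel \<partial>lborel \<partial>lborel)"
    by (rule lborel_pair.Fubini') measurable
  finally show ?thesis
    by (simp add: g_def)
qed

lemma nn_integral_powr_from_0:
  fixes a c :: real
  assumes "a < 1" "0 < c"
  shows "(\<integral>\<^sup>+x. ennreal (indicator {0..c} x * x powr -a) \<partial>lborel) = ennreal (c powr (1 - a) / (1 - a))"
proof -
  have "((\<lambda>x. x powr -a) has_integral (c powr (-a + 1) / (-a + 1))) {0..c}"
    by (rule has_integral_powr_from_0) (use assms in auto)
  from nn_integral_has_integral_lebesgue[OF _ this] show ?thesis
    by (simp add: add.commute)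
qed

lemma nn_integral_powr_to_inf:
  fixes e c :: real
  assumes "e < -1" "0 < c"
  shows "(\<integral>\<^sup>+x. ennreal (indicator {c..} x * x powr e) \<partial>lborel) = ennreal (- (c powr (e + 1)) / (e + 1))"
proof -
  have "((\<lambda>x. x powr e) has_integral (- (c powr (e + 1)) / (e + 1))) {c..}"
    by (rule has_integral_powr_to_inf) (use assms in auto)
  from nn_integral_has_integral_lebesgue[OF _ this] show ?thesis
    by simp
qed

lemma nn_integral_pos_finite_by_powr_bounds:
  fixes f :: "real \<Rightarrow> ennreal" and A B :: ennreal and a c e :: real
  assumes "0 < c" "a < 1" "e < -1" "A < \<infinity>" "B < \<infinity>"
    and near_0: "\<And>x. 0 < x \<Longrightarrow> x \<le> c \<Longrightarrow> f x \<le> A * ennreal (x powr -a)"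
    and near_inf: "\<And>x. c \<le> x \<Longrightarrow> f x \<le> B * ennreal (x powr e)"
  shows "(\<integral>\<^sup>+x \<in> {0<..}. f x \<partial>lborel) < \<infinity>"
proof -
  have "(\<integral>\<^sup>+x \<in> {0<..}. f x \<partial>lborel) \<le>
     (\<integral>\<^sup>+x. A * ennreal (indicator {0..c} x * x powr -a) + B * ennreal (indicator {c..} x * x powr e) \<partial>lborel)"
  proof (intro nn_integral_mono)
    fix x :: real
    show "f x * indicator {0<..} x \<le> A * ennreal (indicator {0..c} x * x powr -a) + B * ennreal (indicator {c..} x * x powr e)"
      using near_0[of x] near_inf[of x] by (cases "0 < x"; cases "x \<le> c") (auto intro: add_increasing add_increasing2)
  qed
  also have "\<dots> = A * (\<integral>\<^sup>+x. ennreal (indicator {0..c} x * x powr -a) \<partial>lborel) +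
                  B * (\<integral>\<^sup>+x. ennreal (indicator {c..} x * x powr e) \<partial>lborel)"
    by (subst nn_integral_add) (auto simp: nn_integral_cmult)
  also have "\<dots> < \<infinity>"
    using assms by (simp add: nn_integral_powr_from_0 nn_integral_powr_to_inf ennreal_mult_less_top)
  finally show ?thesis .
qed

lemma inverse_1_plus_powr_le:
  fixes t r :: real
  assumes "0 < t" "0 \<le> r"
  shows "inverse (1 + t powr r) \<le> t powr -r"
proof -
  have "inverse (1 + t powr r) \<le> inverse (t powr r)"
    by (rule le_imp_inverse_le) (use assms in auto)
  then show ?thesis
    by (simp add: powr_minus)
qed

lemma inverse_1_plus_mean_powr_le:
  fixes x y r :: real
  assumes "0 \<le> x" "0 \<le> y" "0 \<le> r"
  shows "inverse (1 + ((x + y) / 2) powr r) \<le> 3 * (inverse (1 + (x / 2) powr (r / 2)) * inverse (1 + (y / 2) powr (r / 2)))"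
proof -
  define u a b where "u = ((x + y) / 2) powr (r / 2)" and "a = (x / 2) powr (r / 2)" and "b = (y / 2) powr (r / 2)"
  have "a \<le> u" "b \<le> u" "0 \<le> a" "0 \<le> b"
    unfolding u_def a_def b_def using assms by (auto intro: powr_mono2)
  then have "(1 + a) * (1 + b) \<le> (1 + u) * (1 + u)"
    by (intro mult_mono) auto
  also have "\<dots> \<le> 3 * (1 + u * u)"
  proof -
    have "0 \<le> (u - 1) * (u - 1) + u * u + 1"
      by simp
    then show ?thesis
      by (simp add: algebra_simps)
  qed
  also have "u * u = ((x + y) / 2) powr r"
    unfolding u_def by (simp add: powr_add[symmetric])
  finally have "(1 + a) * (1 + b) \<le> 3 * (1 + ((x + y) / 2) powr r)" .
  with \<open>0 \<le> a\<close> \<open>0 \<le> b\<close> show ?thesis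
    unfolding a_def b_def by (simp add: field_simps add_pos_nonneg)
qed

lemma tendsto_nn_integral_min_scaled_0:
  fixes m \<phi> :: "'a \<Rightarrow> real"
  assumes [measurable]: "m \<in> borel_measurable M" "\<phi> \<in> borel_measurable M"
    and nonneg: "\<And>z. 0 \<le> \<phi> z" and finite: "(\<integral>\<^sup>+z. \<phi> z \<partial>M) < \<infinity>"
  shows "((\<lambda>t. \<integral>\<^sup>+z. ennreal (min 1 (m z * t) * \<phi> z) \<partial>M) \<longlongrightarrow> 0) (at_right 0)"
proof (rule tendsto_at_right_sequentially[where b=1])
  fix S :: "nat \<Rightarrow> real"
  assume "S \<longlonglongrightarrow> 0"
  have "(\<lambda>n. \<integral>\<^sup>+z. ennreal (min 1 (m z * S n) * \<phi> z) \<partial>M) \<longlonglongrightarrow> (\<integral>\<^sup>+z. ennreal (min 1 (m z * 0) * \<phi> z) \<partial>M)"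
  proof (rule nn_integral_dominated_convergence[where w="\<lambda>z. ennreal (\<phi> z)"])
    show "AE z in M. ennreal (min 1 (m z * S n) * \<phi> z) \<le> ennreal (\<phi> z)" for n
      using mult_right_mono[OF min.cobounded1 nonneg] by (intro AE_I2 ennreal_leI) (metis mult_1)
    show "AE z in M. (\<lambda>n. ennreal (min 1 (m z * S n) * \<phi> z)) \<longlonglongrightarrow> ennreal (min 1 (m z * 0) * \<phi> z)"
      by (intro AE_I2 tendsto_ennrealI tendsto_intros \<open>S \<longlonglongrightarrow> 0\<close>)
  qed (use finite in auto)
  then show "(\<lambda>n. \<integral>\<^sup>+z. ennreal (min 1 (m z * S n) * \<phi> z) \<partial>M) \<longlonglongrightarrow> 0"
    by simp
qed simp

locale power_decay_kernel =
  fixes \<alpha> \<beta> :: real and K :: "real \<Rightarrow> real" and C :: real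
  assumes alpha_gt: "1/2 < \<alpha>" and alpha_lt: "\<alpha> < 1"
    and beta_pos: "0 < \<beta>" and beta_le: "\<beta> \<le> \<alpha> - 1/2"
    and K_nonneg: "\<And>x. 0 \<le> K x"
    and K_integrable: "integrable lborel K"
    and K_bound: "\<And>x. \<bar>K x\<bar> \<le> C * inverse (1 + \<bar>x\<bar> powr (1 - \<beta>))"
begin

lemma K_measurable [measurable]: "K \<in> borel_measurable borel"
  using borel_measurable_integrable[OF K_integrable] by simp

lemma C_nonneg: "0 \<le> C"
  using K_bound[of 0] K_nonneg[of 0] by simp

lemma K_le_decay:
  assumes "0 \<le> t" "t \<le> \<bar>x\<bar>"
  shows "K x \<le> C * inverse (1 + t powr (1 - \<beta>))"
proof -
  have "t powr (1 - \<beta>) \<le> \<bar>x\<bar> powr (1 - \<beta>)"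
    using assms beta_le alpha_lt by (intro powr_mono2) auto
  then have "inverse (1 + \<bar>x\<bar> powr (1 - \<beta>)) \<le> inverse (1 + t powr (1 - \<beta>))"
    by (intro le_imp_inverse_le) (auto intro: add_pos_nonneg)
  then show ?thesis
    using K_bound[of x] C_nonneg by (meson abs_ge_self mult_left_mono order_trans)
qed

lemma K_le: "K x \<le> C"
  using K_le_decay[of 0 x] by simp

lemma K_le_powr:
  assumes "0 < t" "t \<le> \<bar>x\<bar>"
  shows "K x \<le> C * t powr (\<beta> - 1)"
proof -
  have "inverse (1 + t powr (1 - \<beta>)) \<le> t powr (\<beta> - 1)"
    using inverse_1_plus_powr_le[of t "1 - \<beta>"] assms beta_le alpha_lt by simp
  then show ?thesis
    using K_le_decay[of t x] assms C_nonneg by (meson less_imp_le mult_left_mono order_trans)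
qed

definition mass :: ennreal where
  "mass = (\<integral>\<^sup>+x. K x \<partial>lborel)"

lemma mass_finite: "mass < \<infinity>"
  unfolding mass_def using nn_integral_eq_integral[OF K_integrable] K_nonneg by simp

lemma mass_reflect: "(\<integral>\<^sup>+x. K (a - x) \<partial>lborel) = mass"
  unfolding mass_def using nn_integral_real_affine[of "\<lambda>x. ennreal (K x)" "-1" a] by simp

lemma Delta0_finite: "Delta0 \<alpha> K < \<infinity>"
  unfolding Delta0_def
proof (rule nn_integral_pos_finite_by_powr_bounds[where c=1 and a=\<alpha> and e="-\<alpha> - (1 - \<beta>)" and A=C and B=C])
  fix x :: real
  show "ennreal (x powr -\<alpha> * K x) \<le> ennreal C * ennreal (x powr -\<alpha>)"
    using mult_left_mono[OF K_le, of "x powr -\<alpha>" x] C_nonneg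
    by (simp add: ennreal_mult[symmetric] mult.commute ennreal_leI)
  assume "1 \<le> x"
  then have "x powr -\<alpha> * K x \<le> x powr -\<alpha> * (C * x powr (\<beta> - 1))"
    by (intro mult_left_mono K_le_powr) auto
  also have "\<dots> = C * x powr (-\<alpha> - (1 - \<beta>))"
    by (simp add: powr_add[symmetric] algebra_simps)
  finally show "ennreal (x powr -\<alpha> * K x) \<le> ennreal C * ennreal (x powr (-\<alpha> - (1 - \<beta>)))"
    using C_nonneg by (simp add: ennreal_mult[symmetric] ennreal_leI)
qed (use alpha_gt alpha_lt beta_le in auto)

definition powr_conv :: "real \<Rightarrow> ennreal" where
  "powr_conv w = (\<integral>\<^sup>+x \<in> {0<..}. ennreal (x powr -\<alpha> * K (w - x)) \<partial>lborel)"

lemma powr_conv_le_split: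
  assumes "0 < \<delta>" "0 \<le> k" and K_small: "\<And>x. 0 < x \<Longrightarrow> x \<le> \<delta> \<Longrightarrow> K (w - x) \<le> k"
  shows "powr_conv w \<le> ennreal k * ennreal (\<delta> powr (1 - \<alpha>) / (1 - \<alpha>)) + ennreal (\<delta> powr -\<alpha>) * mass"
proof -
  have "powr_conv w \<le> (\<integral>\<^sup>+x. ennreal k * ennreal (indicator {0..\<delta>} x * x powr -\<alpha>)
                                + ennreal (\<delta> powr -\<alpha>) * ennreal (K (w - x)) \<partial>lborel)"
    unfolding powr_conv_def
  proof (intro nn_integral_mono)
    fix x :: real
    consider "x \<le> 0" | "0 < x" "x \<le> \<delta>" | "\<delta> < x"
      by linarith
    then show "ennreal (x powr -\<alpha> * K (w - x)) * indicator {0<..} x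
        \<le> ennreal k * ennreal (indicator {0..\<delta>} x * x powr -\<alpha>) + ennreal (\<delta> powr -\<alpha>) * ennreal (K (w - x))"
    proof cases
      case 2
      then have "x powr -\<alpha> * K (w - x) \<le> k * x powr -\<alpha>"
        using K_small[of x] by (simp add: mult.commute mult_left_mono)
      with 2 \<open>0 \<le> k\<close> show ?thesis
        by (auto simp: ennreal_mult[symmetric] intro!: add_increasing2 ennreal_leI)
    next
      case 3
      then have "x powr -\<alpha> * K (w - x) \<le> \<delta> powr -\<alpha> * K (w - x)"
        using assms alpha_gt K_nonneg by (intro mult_right_mono powr_mono2') auto
      with 3 \<open>0 < \<delta>\<close> show ?thesis
        by (auto simp: ennreal_mult[OF powr_ge_zero K_nonneg, symmetric] intro!: add_increasing ennreal_leI)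
    qed simp
  qed
  also have "\<dots> = ennreal k * ennreal (\<delta> powr (1 - \<alpha>) / (1 - \<alpha>)) + ennreal (\<delta> powr -\<alpha>) * mass"
    using nn_integral_powr_from_0[of \<alpha> \<delta>] alpha_lt \<open>0 < \<delta>\<close>
    by (subst nn_integral_add) (auto simp: nn_integral_cmult mass_reflect)
  finally show ?thesis .
qed

lemma powr_conv_bounded: "powr_conv w \<le> ennreal C * ennreal (1 / (1 - \<alpha>)) + mass"
  using powr_conv_le_split[of 1 C w] C_nonneg K_le by simp

lemma powr_conv_decay:
  assumes "2 powr (1 / \<beta>) \<le> w"
  shows "powr_conv w \<le> (ennreal (C * 2 powr (1 - \<beta>) / (1 - \<alpha>)) + mass) * ennreal (w powr (-\<alpha> * (1 - \<beta>)))"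
proof -
  define \<delta> where "\<delta> = w powr (1 - \<beta>)"
  have "0 < w"
    using assms by (smt (verit) powr_gt_zero)
  then have "0 < \<delta>"
    unfolding \<delta>_def by simp
  have "2 = (2 powr (1 / \<beta>)) powr \<beta>"
    using beta_pos by (simp add: powr_powr)
  also have "\<dots> \<le> w powr \<beta>"
    using assms beta_pos by (intro powr_mono2) auto
  moreover have "\<delta> * w powr \<beta> = w"
    unfolding \<delta>_def using \<open>0 < w\<close> by (simp add: powr_add[symmetric])
  ultimately have "\<delta> * 2 \<le> w"
    using \<open>0 < \<delta>\<close> by (metis mult_left_mono less_imp_le)
  then have "K (w - x) \<le> C * (w / 2) powr (\<beta> - 1)" if "0 < x" "x \<le> \<delta>" for x
    using that \<open>0 < w\<close> by (intro K_le_powr) auto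
  then have "powr_conv w \<le> ennreal (C * (w / 2) powr (\<beta> - 1)) * ennreal (\<delta> powr (1 - \<alpha>) / (1 - \<alpha>))
      + ennreal (\<delta> powr -\<alpha>) * mass"
    using \<open>0 < \<delta>\<close> C_nonneg by (intro powr_conv_le_split) auto
  also have "ennreal (C * (w / 2) powr (\<beta> - 1)) * ennreal (\<delta> powr (1 - \<alpha>) / (1 - \<alpha>))
      = ennreal (C * 2 powr (1 - \<beta>) / (1 - \<alpha>)) * ennreal (w powr (-\<alpha> * (1 - \<beta>)))"
  proof -
    have "(w / 2) powr (\<beta> - 1) * \<delta> powr (1 - \<alpha>) = 2 powr (1 - \<beta>) * w powr (-\<alpha> * (1 - \<beta>))"
      using \<open>0 < w\<close> unfolding \<delta>_def
      by (simp add: powr_divide powr_powr powr_add[symmetric] powr_minus_divide[of 2] divide_simps algebra_simps)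
    then show ?thesis
      using C_nonneg alpha_lt by (simp add: ennreal_mult[symmetric] field_simps)
  qed
  also have "\<delta> powr -\<alpha> = w powr (-\<alpha> * (1 - \<beta>))"
    unfolding \<delta>_def by (simp add: powr_powr mult.commute)
  finally show ?thesis
    by (simp only: distrib_right mult.commute[of mass])
qed

lemma powr_conv_square_finite: "(\<integral>\<^sup>+w \<in> {0<..}. powr_conv w * powr_conv w \<partial>lborel) < \<infinity>"
proof -
  define A where "A = (ennreal C * ennreal (1 / (1 - \<alpha>)) + mass)\<^sup>2"
  define B where "B = (ennreal (C * 2 powr (1 - \<beta>) / (1 - \<alpha>)) + mass)\<^sup>2"
  have "1 < 2 * \<alpha> * (1 - \<beta>)"
  proof -
    have "2 * \<alpha> * (3/2 - \<alpha>) \<le> 2 * \<alpha> * (1 - \<beta>)"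
      using alpha_gt beta_le by (intro mult_left_mono) auto
    moreover have "0 < (2 * \<alpha> - 1) * (1 - \<alpha>)"
      using alpha_gt alpha_lt by (intro mult_pos_pos) auto
    ultimately show ?thesis
      by (simp add: algebra_simps)
  qed
  then show ?thesis
  proof (intro nn_integral_pos_finite_by_powr_bounds[where c="2 powr (1 / \<beta>)" and a=0 and e="-2 * \<alpha> * (1 - \<beta>)" and A=A and B=B])
    show "A < \<infinity>" "B < \<infinity>"
      unfolding A_def B_def using mass_finite by (simp_all add: ennreal_mult_less_top power2_eq_square)
    show "powr_conv x * powr_conv x \<le> A * ennreal (x powr -0)" if "0 < x" for x
      using mult_mono[OF powr_conv_bounded powr_conv_bounded] that by (simp add: A_def power2_eq_square)
    show "powr_conv x * powr_conv x \<le> B * ennreal (x powr (-2 * \<alpha> * (1 - \<beta>)))" if "2 powr (1 / \<beta>) \<le> x" for x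
    proof -
      have "ennreal (x powr (-2 * \<alpha> * (1 - \<beta>))) = (ennreal (x powr (-\<alpha> * (1 - \<beta>))))\<^sup>2"
        by (simp add: power2_eq_square ennreal_mult[symmetric] powr_add[symmetric] mult.assoc)
      then show ?thesis
        using mult_mono[OF powr_conv_decay[OF that] powr_conv_decay[OF that]]
        by (simp add: B_def power2_eq_square mult_ac)
    qed
  qed auto
qed

lemma K_self_conv_le:
  assumes "0 < s"
  shows "(\<integral>\<^sup>+w. ennreal (K w * K (s - w)) \<partial>lborel) \<le> ennreal (2 * C * inverse (1 + (s / 2) powr (1 - \<beta>))) * mass"
proof -
  define q where "q = C * inverse (1 + (s / 2) powr (1 - \<beta>))"
  have "0 \<le> q"
    unfolding q_def using C_nonneg by simp
  have "K w * K (s - w) \<le> q * K (s - w) + q * K w" for w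
  proof (cases "s / 2 \<le> w")
    case True
    then have "K w \<le> q"
      unfolding q_def using assms by (intro K_le_decay) auto
    then have "K w * K (s - w) \<le> q * K (s - w)"
      using K_nonneg by (intro mult_right_mono)
    then show ?thesis
      using K_nonneg[of w] \<open>0 \<le> q\<close> by (simp add: add_increasing2)
  next
    case False
    then have "K (s - w) \<le> q"
      unfolding q_def using assms by (intro K_le_decay) auto
    then have "K w * K (s - w) \<le> q * K w"
      using K_nonneg by (subst mult.commute) (intro mult_right_mono)
    then show ?thesis
      using K_nonneg[of "s - w"] \<open>0 \<le> q\<close> by (simp add: add_increasing)
  qed
  moreover have "ennreal (q * K (s - w) + q * K w) = ennreal q * ennreal (K (s - w)) + ennreal q * ennreal (K w)" for w
    using \<open>0 \<le> q\<close> K_nonneg by (simp add: ennreal_plus ennreal_mult)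
  ultimately have "(\<integral>\<^sup>+w. ennreal (K w * K (s - w)) \<partial>lborel)
      \<le> (\<integral>\<^sup>+w. ennreal q * ennreal (K (s - w)) + ennreal q * ennreal (K w) \<partial>lborel)"
    by (intro nn_integral_mono) (metis ennreal_leI)
  also have "\<dots> = ennreal q * mass + ennreal q * mass"
    by (subst nn_integral_add) (auto simp: nn_integral_cmult mass_reflect mass_def)
  also have "\<dots> = ennreal (2 * q) * mass"
    using \<open>0 \<le> q\<close> ennreal_plus[of q q] by (simp add: distrib_right[symmetric])
  finally show ?thesis
    by (simp add: q_def mult.assoc)
qed

definition decay_root :: "real \<Rightarrow> real" where
  "decay_root x = inverse (1 + (x / 2) powr ((1 - \<beta>) / 2))"

definition weight :: "real \<Rightarrow> ennreal" where
  "weight x = ennreal (x powr -\<alpha> * decay_root x) * indicator {0<..} x"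

lemma decay_root_nonneg: "0 \<le> decay_root x"
  unfolding decay_root_def by simp

lemma weight_measurable [measurable]: "weight \<in> borel_measurable borel"
  unfolding weight_def decay_root_def by measurable

lemma weight_finite: "(\<integral>\<^sup>+x. weight x \<partial>lborel) < \<infinity>"
  unfolding weight_def
proof (rule nn_integral_pos_finite_by_powr_bounds[where c=1 and a=\<alpha> and e="-\<alpha> - (1 - \<beta>) / 2"
      and A=1 and B="ennreal (2 powr ((1 - \<beta>) / 2))"])
  show "-\<alpha> - (1 - \<beta>) / 2 < -1"
    using alpha_gt beta_le by (simp add: field_simps)
  fix x :: real
  show "ennreal (x powr -\<alpha> * decay_root x) \<le> 1 * ennreal (x powr -\<alpha>)"
    by (simp add: decay_root_def ennreal_leI mult_left_le inverse_le_1_iff)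
  assume "1 \<le> x"
  then have "decay_root x \<le> (x / 2) powr -((1 - \<beta>) / 2)"
    unfolding decay_root_def using alpha_lt beta_le by (intro inverse_1_plus_powr_le) auto
  then have "x powr -\<alpha> * decay_root x \<le> x powr -\<alpha> * (x / 2) powr -((1 - \<beta>) / 2)"
    by (rule mult_left_mono) simp
  also have "\<dots> = 2 powr ((1 - \<beta>) / 2) * x powr (-\<alpha> - (1 - \<beta>) / 2)"
    using \<open>1 \<le> x\<close> by (simp add: powr_divide powr_minus_divide[of 2] powr_add[symmetric] divide_simps algebra_simps)
  finally show "ennreal (x powr -\<alpha> * decay_root x) \<le> ennreal (2 powr ((1 - \<beta>) / 2)) * ennreal (x powr (-\<alpha> - (1 - \<beta>) / 2))"
    by (simp add: ennreal_mult[symmetric] ennreal_leI)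
qed (use alpha_gt alpha_lt beta_le in auto)

definition A1_integrand :: "real \<Rightarrow> real \<Rightarrow> real \<Rightarrow> real" where
  "A1_integrand x y w = indicator {0<..} x * indicator {0<..} y * indicator {0<..} w * (x powr -\<alpha> * y powr -\<alpha> * I1 K x y w)"

definition A2_integrand :: "real \<Rightarrow> real \<Rightarrow> real \<Rightarrow> real" where
  "A2_integrand x y w = indicator {0<..} x * indicator {0<..} y * indicator {0<..} w * (x powr -\<alpha> * y powr -\<alpha> * I2 K x y w)"

definition A_integrand :: "real \<Rightarrow> real \<Rightarrow> real \<Rightarrow> real" where
  "A_integrand x y w = A1_integrand x y w + A2_integrand x y w"

lemma A1_integrand_measurable [measurable (raw)]:
  assumes [measurable]: "f \<in> borel_measurable N" "g \<in> borel_measurable N" "h \<in> borel_measurable N"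
  shows "(\<lambda>t. A1_integrand (f t) (g t) (h t)) \<in> borel_measurable N"
  unfolding A1_integrand_def I1_def by measurable

lemma A2_integrand_measurable [measurable (raw)]:
  assumes [measurable]: "f \<in> borel_measurable N" "g \<in> borel_measurable N" "h \<in> borel_measurable N"
  shows "(\<lambda>t. A2_integrand (f t) (g t) (h t)) \<in> borel_measurable N"
  unfolding A2_integrand_def I2_def by measurable

lemma A_integrand_measurable [measurable (raw)]:
  assumes [measurable]: "f \<in> borel_measurable N" "g \<in> borel_measurable N" "h \<in> borel_measurable N"
  shows "(\<lambda>t. A_integrand (f t) (g t) (h t)) \<in> borel_measurable N"
  unfolding A_integrand_def by measurable

lemma integrands_nonneg: "0 \<le> A1_integrand x y w" "0 \<le> A2_integrand x y w" "0 \<le> A_integrand x y w"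
  unfolding A_integrand_def A1_integrand_def A2_integrand_def I1_def I2_def using K_nonneg by simp_all

lemma A1_inner_le: "(\<integral>\<^sup>+w. A1_integrand x y w \<partial>lborel) \<le> ennreal (6 * C) * mass * (weight x * weight y)"
proof (cases "0 < x \<and> 0 < y")
  case True
  define c where "c = x powr -\<alpha> * y powr -\<alpha>"
  have "0 \<le> c"
    unfolding c_def by simp
  have "(\<integral>\<^sup>+w. A1_integrand x y w \<partial>lborel) \<le> (\<integral>\<^sup>+w. ennreal c * ennreal (K w * K (x + y - w)) \<partial>lborel)"
    using \<open>0 \<le> c\<close> K_nonneg
    by (intro nn_integral_mono) (auto simp: A1_integrand_def I1_def c_def ennreal_mult[symmetric] indicator_def)
  also have "\<dots> = ennreal c * (\<integral>\<^sup>+w. ennreal (K w * K (x + y - w)) \<partial>lborel)"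
    by (rule nn_integral_cmult) measurable
  also have "\<dots> \<le> ennreal c * (ennreal (2 * C * inverse (1 + ((x + y) / 2) powr (1 - \<beta>))) * mass)"
    using True by (intro mult_left_mono K_self_conv_le) auto
  also have "\<dots> \<le> ennreal c * (ennreal (2 * C * (3 * (decay_root x * decay_root y))) * mass)"
    using inverse_1_plus_mean_powr_le[of x y "1 - \<beta>"] True alpha_lt beta_le C_nonneg
    by (intro mult_left_mono mult_right_mono ennreal_leI) (auto simp: decay_root_def)
  also have "\<dots> = ennreal (6 * C) * mass * (weight x * weight y)"
    using True C_nonneg \<open>0 \<le> c\<close> decay_root_nonneg
    by (simp add: weight_def c_def ennreal_mult[symmetric] mult_ac)
  finally show ?thesis .
next
  case False
  then have "A1_integrand x y w = 0" for w
    unfolding A1_integrand_def by auto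
  then show ?thesis
    by simp
qed

lemma A1_finite: "(\<integral>\<^sup>+x. \<integral>\<^sup>+y. \<integral>\<^sup>+w. A1_integrand x y w \<partial>lborel \<partial>lborel \<partial>lborel) < \<infinity>"
proof -
  have "(\<integral>\<^sup>+x. \<integral>\<^sup>+y. \<integral>\<^sup>+w. A1_integrand x y w \<partial>lborel \<partial>lborel \<partial>lborel)
      \<le> (\<integral>\<^sup>+x. \<integral>\<^sup>+y. ennreal (6 * C) * mass * weight x * weight y \<partial>lborel \<partial>lborel)"
    using A1_inner_le by (intro nn_integral_mono) (simp add: mult.assoc)
  also have "\<dots> = ennreal (6 * C) * mass * (\<integral>\<^sup>+x. weight x \<partial>lborel) * (\<integral>\<^sup>+y. weight y \<partial>lborel)"
    by (simp add: nn_integral_cmult nn_integral_multc)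
  also have "\<dots> < \<infinity>"
    using weight_finite mass_finite by (simp add: ennreal_mult_less_top)
  finally show ?thesis .
qed

lemma A2_inner_eq:
  "(\<integral>\<^sup>+y. \<integral>\<^sup>+x. A2_integrand x y w \<partial>lborel \<partial>lborel) = powr_conv w * powr_conv w * indicator {0<..} w"
proof -
  define v where "v y = ennreal (y powr -\<alpha> * K (w - y)) * indicator {0<..} y" for y
  have v_measurable [measurable]: "v \<in> borel_measurable borel"
    unfolding v_def by measurable
  have powr_conv_v: "powr_conv w = (\<integral>\<^sup>+x. v x \<partial>lborel)"
    unfolding powr_conv_def v_def ..
  have factor: "ennreal (A2_integrand x y w) = v x * (v y * indicator {0<..} w)" for x y
    using K_nonneg by (simp add: v_def A2_integrand_def I2_def ennreal_mult[symmetric] indicator_def)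
  have "(\<integral>\<^sup>+x. A2_integrand x y w \<partial>lborel) = powr_conv w * (v y * indicator {0<..} w)" for y
    unfolding factor powr_conv_v by (rule nn_integral_multc) measurable
  then have "(\<integral>\<^sup>+y. \<integral>\<^sup>+x. A2_integrand x y w \<partial>lborel \<partial>lborel)
      = powr_conv w * (\<integral>\<^sup>+y. v y * indicator {0<..} w \<partial>lborel)"
    by (simp only:) (rule nn_integral_cmult, measurable)
  also have "(\<integral>\<^sup>+y. v y * indicator {0<..} w \<partial>lborel) = powr_conv w * indicator {0<..} w"
    unfolding powr_conv_v by (rule nn_integral_multc) measurable
  finally show ?thesis
    by (simp add: mult.assoc)
qed

lemma A2_finite: "(\<integral>\<^sup>+w. \<integral>\<^sup>+y. \<integral>\<^sup>+x. A2_integrand x y w \<partial>lborel \<partial>lborel \<partial>lborel) < \<infinity>"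
  using powr_conv_square_finite by (simp add: A2_inner_eq)

lemma A_integrand_finite:
  "(\<integral>\<^sup>+z. A_integrand (fst z) (fst (snd z)) (snd (snd z)) \<partial>lborel) < \<infinity>"
proof -
  have "(\<integral>\<^sup>+z. A_integrand (fst z) (fst (snd z)) (snd (snd z)) \<partial>lborel)
      = (\<integral>\<^sup>+z. A1_integrand (fst z) (fst (snd z)) (snd (snd z)) \<partial>lborel)
        + (\<integral>\<^sup>+z. A2_integrand (fst z) (fst (snd z)) (snd (snd z)) \<partial>lborel)"
    unfolding A_integrand_def using integrands_nonneg
    by (subst nn_integral_add[symmetric]) (simp_all add: ennreal_plus flip: borel_prod, measurable)
  also have "(\<integral>\<^sup>+z. A1_integrand (fst z) (fst (snd z)) (snd (snd z)) \<partial>lborel)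
      = (\<integral>\<^sup>+x. \<integral>\<^sup>+y. \<integral>\<^sup>+w. A1_integrand x y w \<partial>lborel \<partial>lborel \<partial>lborel)"
    by (rule nn_integral_lborel_triple[symmetric]) measurable
  also have "(\<integral>\<^sup>+z. A2_integrand (fst z) (fst (snd z)) (snd (snd z)) \<partial>lborel)
      = (\<integral>\<^sup>+w. \<integral>\<^sup>+y. \<integral>\<^sup>+x. A2_integrand x y w \<partial>lborel \<partial>lborel \<partial>lborel)"
    by (subst nn_integral_lborel_triple_reverse) (simp_all add: nn_integral_lborel_triple, measurable)
  finally show ?thesis
    using A1_finite A2_finite by (simp add: ennreal_add_less_top)
qed

lemma A_alpha_eq: "A_alpha \<alpha> K = (\<integral>\<^sup>+w. \<integral>\<^sup>+y. \<integral>\<^sup>+x. A_integrand x y w \<partial>lborel \<partial>lborel \<partial>lborel)"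
  unfolding A_alpha_def
  by (intro nn_integral_cong)
     (auto simp: A_integrand_def A1_integrand_def A2_integrand_def indicator_def distrib_left intro!: nn_integral_cong)

lemma A_alpha_finite: "A_alpha \<alpha> K < \<infinity>"
proof -
  have "A_alpha \<alpha> K = (\<integral>\<^sup>+x. \<integral>\<^sup>+y. \<integral>\<^sup>+w. A_integrand x y w \<partial>lborel \<partial>lborel \<partial>lborel)"
    unfolding A_alpha_eq by (rule nn_integral_lborel_triple_reverse) measurable
  also have "\<dots> = (\<integral>\<^sup>+z. A_integrand (fst z) (fst (snd z)) (snd (snd z)) \<partial>lborel)"
    by (rule nn_integral_lborel_triple) measurable
  finally show ?thesis
    using A_integrand_finite by simp
qed

definition Delta1_integrand :: "real \<Rightarrow> real \<Rightarrow> real \<Rightarrow> real \<Rightarrow> real" where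
  "Delta1_integrand h x y w = indicator {0..1/h} x * indicator {0..1/h} y * indicator {x..1/h} w
     * (x powr -\<alpha> * y powr -\<alpha> * max w y * (I1 K x y w + I2 K x y w))"

lemma Delta1_eq:
  "Delta1 \<alpha> K h = (\<integral>\<^sup>+x. \<integral>\<^sup>+y. \<integral>\<^sup>+w. Delta1_integrand h x y w \<partial>lborel \<partial>lborel \<partial>lborel)"
  unfolding Delta1_def
  by (intro nn_integral_cong) (auto simp: Delta1_integrand_def indicator_def intro!: nn_integral_cong)

lemma Delta1_integrand_scaled_le:
  assumes "0 < h"
  shows "h * Delta1_integrand h x y w \<le> min 1 (max w y * h) * A_integrand x y w"
proof (cases "0 < x \<and> 0 < y \<and> x \<le> w \<and> w \<le> 1/h \<and> y \<le> 1/h")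
  case True
  then have "Delta1_integrand h x y w = max w y * A_integrand x y w"
    by (simp add: Delta1_integrand_def A_integrand_def A1_integrand_def A2_integrand_def algebra_simps)
  moreover have "h * max w y \<le> min 1 (max w y * h)"
    using True assms by (simp add: field_simps max_def)
  ultimately show ?thesis
    using integrands_nonneg(3)[of x y w] by (simp add: mult_right_mono mult.assoc[symmetric])
next
  case False
  then have "Delta1_integrand h x y w = 0"
    by (auto simp: Delta1_integrand_def indicator_def)
  moreover have "0 \<le> min 1 (max w y * h) * A_integrand x y w"
  proof (cases "0 < y")
    case True
    then show ?thesis
      using assms integrands_nonneg(3)[of x y w] by (intro mult_nonneg_nonneg) auto
  qed (simp add: A_integrand_def A1_integrand_def A2_integrand_def)
  ultimately show ?thesis
    by simp
qed

lemma Delta1_integrand_measurable [measurable (raw)]: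
  assumes [measurable]: "f \<in> borel_measurable N" "g \<in> borel_measurable N" "k \<in> borel_measurable N"
  shows "(\<lambda>t. Delta1_integrand h (f t) (g t) (k t)) \<in> borel_measurable N"
  unfolding Delta1_integrand_def I1_def I2_def indicator_def atLeastAtMost_iff by measurable

lemma Delta1_scaled_le:
  assumes "0 < h"
  shows "ennreal h * Delta1 \<alpha> K h
    \<le> (\<integral>\<^sup>+z. ennreal (min 1 (max (snd (snd z)) (fst (snd z)) * h) * A_integrand (fst z) (fst (snd z)) (snd (snd z))) \<partial>lborel)"
proof -
  have "ennreal h * Delta1 \<alpha> K h
      = ennreal h * (\<integral>\<^sup>+z. Delta1_integrand h (fst z) (fst (snd z)) (snd (snd z)) \<partial>lborel)"
    unfolding Delta1_eq by (subst nn_integral_lborel_triple) (simp_all, measurable)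
  also have "\<dots> = (\<integral>\<^sup>+z. ennreal (h * Delta1_integrand h (fst z) (fst (snd z)) (snd (snd z))) \<partial>lborel)"
    using assms by (subst nn_integral_cmult[symmetric]) (simp_all add: ennreal_mult' flip: borel_prod, measurable)
  also have "\<dots> \<le> (\<integral>\<^sup>+z. ennreal (min 1 (max (snd (snd z)) (fst (snd z)) * h) * A_integrand (fst z) (fst (snd z)) (snd (snd z))) \<partial>lborel)"
    using Delta1_integrand_scaled_le[OF assms] by (intro nn_integral_mono ennreal_leI)
  finally show ?thesis .
qed

lemma Delta1_scaled_tendsto_0: "((\<lambda>h. ennreal h * Delta1 \<alpha> K h) \<longlongrightarrow> 0) (at_right 0)"
proof (rule tendsto_sandwich[OF _ _ tendsto_const])
  show "\<forall>\<^sub>F h in at_right 0. 0 \<le> ennreal h * Delta1 \<alpha> K h"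
    by simp
  show "\<forall>\<^sub>F h in at_right 0. ennreal h * Delta1 \<alpha> K h
    \<le> (\<integral>\<^sup>+z. ennreal (min 1 (max (snd (snd z)) (fst (snd z)) * h) * A_integrand (fst z) (fst (snd z)) (snd (snd z))) \<partial>lborel)"
    using eventually_at_right_less[of 0] by eventually_elim (rule Delta1_scaled_le)
  show "((\<lambda>h. \<integral>\<^sup>+z. ennreal (min 1 (max (snd (snd z)) (fst (snd z)) * h) * A_integrand (fst z) (fst (snd z)) (snd (snd z))) \<partial>lborel) \<longlongrightarrow> 0) (at_right 0)"
    using integrands_nonneg(3) A_integrand_finite by (intro tendsto_nn_integral_min_scaled_0) (simp_all flip: borel_prod, measurable)
qed

end

theorem lemmaA6:
  fixes \<alpha> \<beta> :: real and K :: "real \<Rightarrow> real"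
  assumes "1/2 < \<alpha>" "\<alpha> < 1" "0 < \<beta>" "\<beta> \<le> \<alpha> - 1/2"
    and "\<And>x. K x \<ge> 0"
    and "\<And>x. K (-x) = K x"
    and "integrable lborel K"
    and "\<exists>C. \<forall>x. \<bar>K x\<bar> \<le> C * inverse (1 + \<bar>x\<bar> powr (1 - \<beta>))"
  shows "Delta0 \<alpha> K < \<infinity> \<and> A_alpha \<alpha> K < \<infinity> \<and>
         ((\<lambda>h. ennreal h * Delta1 \<alpha> K h) \<longlongrightarrow> 0) (at_right 0)"
proof -
  obtain C where "\<forall>x. \<bar>K x\<bar> \<le> C * inverse (1 + \<bar>x\<bar> powr (1 - \<beta>))"
    using assms(8) by blast
  then interpret power_decay_kernel \<alpha> \<beta> K C
    using assms(1-5,7) by unfold_locales auto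
  show ?thesis
    using Delta0_finite A_alpha_finite Delta1_scaled_tendsto_0 by simp
qed

end
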